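(* Let $G=K_n$ with $n\ge2$, $F$ regular, $T=F^{-1}(1-1/n)$ and $p=T\cdot(1-1/n)^{n-1}$. Then for every equilibrium $\mathbf{T}'\in\mathcal{N}_{p\cdot\mathbf{1}}$, $$\mathcal{R}(p\cdot\mathbf{1},\mathbf{T}')\ge c\cdot\mathcal{R}(p\cdot\mathbf{1},T\cdot\mathbf{1})$$ for an absolute constant $c>0$ (one may take $c=1/2$).
   Context: Public-goods pricing game on the complete graph $K_n$: buyer $i$'s neighbours are all $j\neq i$. Values i.i.d. with cumulative distribution function $F$, $F(\infty)=1$. An equilibrium for $\mathbf{p}$ is $\mathbf{T}\in[0,\infty]^n$ (buyer $i$ purchases iff $v_i\ge T_i$) with $T_i=p_i/\prod_{j\neq i}F(T_j)$ for all $i$ (convention $c/0=\infty$); $\mathcal{N}_{\mathbf{p}}$ is the set of equilibria; $\mathcal{R}(\mathbf{p},\mathbf{T})=\sum_ip_i(1-F(T_i))$; $p\cdot\mathbf{1}$ is the uniform price vector. $F$ is regular: atomless, supported on an interval in $[0,\infty)$ with positive density $f$ there, and $\phi(x)=x-\frac{1-F(x)}{f(x)}$ non-decreasing. $F^{-1}(q)=\min\{x:F(x)=q\}$. *)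

theory Defs
  imports "HOL-Analysis.Analysis"
begin

definition Fe :: "(real \<Rightarrow> real) \<Rightarrow> ereal \<Rightarrow> real" where
  "Fe F t = (case t of ereal x \<Rightarrow> F x | PInfty \<Rightarrow> 1 | MInfty \<Rightarrow> 0)"

definition ediv :: "real \<Rightarrow> real \<Rightarrow> ereal" where
  "ediv c d = (if d = 0 then PInfty else ereal (c / d))"

text \<open>Regular distribution: atomless (continuous CDF), supported on an interval
  between a \<ge> 0 and b \<le> \<infinity> with positive density f there, and non-decreasing
  virtual value x - (1 - F x)/f x on the support.\<close>
definition regular :: "(real \<Rightarrow> real) \<Rightarrow> bool" where
  "regular F \<longleftrightarrow> (\<exists>f (a::real) (b::ereal).
      0 \<le> a \<and> ereal a < b \<and>
      continuous_on UNIV F \<and>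
      (\<forall>x. x \<le> a \<longrightarrow> F x = 0) \<and>
      (\<forall>x. b \<le> ereal x \<longrightarrow> F x = 1) \<and>
      (F \<longlongrightarrow> 1) at_top \<and>
      (\<forall>x. a < x \<and> ereal x < b \<longrightarrow> (F has_real_derivative f x) (at x) \<and> f x > 0) \<and>
      (\<forall>x y. a < x \<and> x \<le> y \<and> ereal y < b \<longrightarrow>
              x - (1 - F x) / f x \<le> y - (1 - F y) / f y))"

definition Finv :: "(real \<Rightarrow> real) \<Rightarrow> real \<Rightarrow> real" where
  "Finv F q = (LEAST x. F x = q)"

definition equilibria :: "nat \<Rightarrow> (real \<Rightarrow> real) \<Rightarrow> (nat \<Rightarrow> real) \<Rightarrow> (nat \<Rightarrow> ereal) set" where
  "equilibria n F p = {T. \<forall>i<n. 0 \<le> T i \<and>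
       T i = ediv (p i) (\<Prod>j\<in>{..<n} - {i}. Fe F (T j))}"

definition revenue :: "nat \<Rightarrow> (real \<Rightarrow> real) \<Rightarrow> (nat \<Rightarrow> real) \<Rightarrow> (nat \<Rightarrow> ereal) \<Rightarrow> real" where
  "revenue n F p T = (\<Sum>i<n. p i * (1 - Fe F (T i)))"

end

theory Submission
  imports Defs
begin

text \<open>At the uniform threshold T every buyer buys with probability 1/n, so the revenue there is
  just the price p. At an equilibrium T' the revenue is p times the expected number of buyers,
  so it suffices that this number is at least 1/2. If it were smaller, the Weierstrass product
  inequality would make each product of purchase-avoidance probabilities exceed 1/2, so every
  threshold would be at most 2p; since (1 - 1/n)^(n-1) \<le> 1/2 this is at most T, hence each
  buyer buys with probability at least 1/n, and the expected number of buyers is at least 1.\<close>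

lemma regular_cdfE:
  assumes "regular F"
  obtains a where "0 \<le> a" "continuous_on UNIV F" "\<And>x. x \<le> a \<Longrightarrow> F x = 0"
    "(F \<longlongrightarrow> 1) at_top" "mono_on {a..} F"
proof -
  obtain f a b where a0: "0 \<le> a" and ab: "ereal a < b" and cont: "continuous_on UNIV F"
    and low: "\<forall>x. x \<le> a \<longrightarrow> F x = 0" and up: "\<forall>x. b \<le> ereal x \<longrightarrow> F x = 1"
    and lim: "(F \<longlongrightarrow> 1) at_top"
    and der: "\<forall>x. a < x \<and> ereal x < b \<longrightarrow> (F has_real_derivative f x) (at x) \<and> f x > 0"
    using assms unfolding regular_def by blast
  have inner: "F x \<le> F y" if "a \<le> x" "x \<le> y" "ereal y \<le> b" for x y
  proof (rule DERIV_nonneg_imp_increasing_open[OF that(2)])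
    fix z assume "x < z" "z < y"
    hence "a < z" "ereal z < b" using that by (auto intro: less_le_trans[of _ "ereal y"])
    thus "\<exists>d. (F has_real_derivative d) (at z) \<and> 0 \<le> d" using der by (meson less_le)
  qed (use cont continuous_on_subset in blast)
  have "F x \<le> F y" if "a \<le> x" "x \<le> y" for x y
  proof (cases "b \<le> ereal y")
    case True
    then obtain c where c: "b = ereal c" using ab by (cases b) auto
    show ?thesis
    proof (cases "x \<le> c")
      case True
      have "F x \<le> F c" using inner[of x c] that True c by auto
      thus ?thesis using up c \<open>b \<le> ereal y\<close> by simp
    qed (use up c \<open>b \<le> ereal y\<close> in simp)
  qed (use inner that in auto)
  then have "mono_on {a..} F" by (auto intro: mono_onI)
  with a0 cont low lim show thesis using that by blast
qed

lemma regular_cdf_nonneg: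
  assumes "regular F"
  shows "0 \<le> F x"
proof -
  obtain a where low: "\<And>x. x \<le> a \<Longrightarrow> F x = 0" and mono: "mono_on {a..} F"
    using regular_cdfE[OF assms] by blast
  show ?thesis
  proof (cases "x \<le> a")
    case False
    then have "F a \<le> F x" by (intro mono_onD[OF mono]) auto
    thus ?thesis using low by simp
  qed (use low in simp)
qed

lemma regular_cdf_le_1:
  assumes "regular F"
  shows "F x \<le> 1"
proof -
  obtain a where low: "\<And>x. x \<le> a \<Longrightarrow> F x = 0" and lim: "(F \<longlongrightarrow> 1) at_top"
    and mono: "mono_on {a..} F"
    using regular_cdfE[OF assms] by blast
  show ?thesis
  proof (cases "x \<le> a")
    case False
    have "\<forall>\<^sub>F y in at_top. F x \<le> F y"
      using eventually_ge_at_top[of x] by eventually_elim (use False in \<open>auto intro: mono_onD[OF mono]\<close>)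
    then show ?thesis using tendsto_lowerbound[OF lim] by simp
  qed (use low in simp)
qed

lemma regular_cdf_mono:
  assumes "regular F"
  shows "mono F"
proof (rule monoI)
  fix x y :: real assume "x \<le> y"
  obtain a where low: "\<And>x. x \<le> a \<Longrightarrow> F x = 0" and mono: "mono_on {a..} F"
    using regular_cdfE[OF assms] by blast
  show "F x \<le> F y"
  proof (cases "x \<le> a")
    case True thus ?thesis using low regular_cdf_nonneg[OF assms] by simp
  qed (use \<open>x \<le> y\<close> in \<open>auto intro: mono_onD[OF mono]\<close>)
qed

lemma F_LEAST_eq_continuous:
  fixes f :: "real \<Rightarrow> real"
  assumes "continuous_on UNIV f" "f x = c" "bdd_below {x. f x = c}"
  shows "f (LEAST x. f x = c) = c"
proof -
  let ?S = "{x. f x = c}"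
  have "closed ?S"
    using continuous_closed_preimage_constant[OF assms(1) closed_UNIV, of c] by simp
  then have Inf_in: "Inf ?S \<in> ?S"
    using closed_contains_Inf[OF _ assms(3)] assms(2) by blast
  have "(LEAST x. f x = c) = Inf ?S"
    by (rule Least_equality) (use Inf_in cInf_lower[OF _ assms(3)] in auto)
  with Inf_in show ?thesis by simp
qed

lemma regular_F_Finv:
  assumes "regular F" "0 < c" "c < 1"
  shows "F (Finv F c) = c" and "0 \<le> Finv F c"
proof -
  obtain a where a0: "0 \<le> a" and cont: "continuous_on UNIV F"
    and low: "\<And>x. x \<le> a \<Longrightarrow> F x = 0" and lim: "(F \<longlongrightarrow> 1) at_top"
    using regular_cdfE[OF assms(1)] by blast
  obtain z where z: "\<And>x. x \<ge> z \<Longrightarrow> F x > c"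
    using order_tendstoD(1)[OF lim assms(3)] by (auto simp: eventually_at_top_linorder)
  have "F a \<le> c" "c \<le> F (max z a)" "a \<le> max z a" using low z[of "max z a"] assms by auto
  then obtain x where x: "F x = c" using IVT'[of F a c "max z a"] cont continuous_on_subset by blast
  have above_a: "a < y" if "F y = c" for y
    using low[of y] that assms(2) by force
  have "bdd_below {x. F x = c}"
    by (rule bdd_belowI[of _ a]) (use above_a in \<open>auto intro: less_imp_le\<close>)
  then show F_Finv: "F (Finv F c) = c"
    unfolding Finv_def by (rule F_LEAST_eq_continuous[OF cont x])
  show "0 \<le> Finv F c" using above_a[OF F_Finv] a0 by simp
qed

lemma prod_ge_1_minus_sum:
  fixes q :: "'a \<Rightarrow> real"
  assumes "finite I" "\<And>i. i \<in> I \<Longrightarrow> 0 \<le> q i \<and> q i \<le> 1"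
  shows "1 - (\<Sum>i\<in>I. 1 - q i) \<le> (\<Prod>i\<in>I. q i)"
  using assms
proof (induction I rule: finite_induct)
  case (insert j I)
  let ?P = "\<Prod>i\<in>I. q i" and ?s = "\<Sum>i\<in>I. 1 - q i"
  have P: "1 - ?s \<le> ?P" and q: "0 \<le> q j" "q j \<le> 1" using insert by auto
  have "0 \<le> ?s" using insert by (intro sum_nonneg) auto
  then have "1 - ?s - (1 - q j) \<le> q j * (1 - ?s)"
    using mult_right_mono[OF q(2), of ?s] by (simp add: algebra_simps)
  also have "\<dots> \<le> q j * ?P" using mult_left_mono[OF P q(1)] .
  finally show ?case using insert by simp
qed simp

lemma one_minus_inverse_power_le_half:
  assumes "n \<ge> (2::nat)"
  shows "(1 - 1 / real n) ^ (n - 1) \<le> 1 / 2"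
proof -
  define m where "m = n - 1"
  have m: "m \<ge> 1" "real n = real m + 1" using assms by (auto simp: m_def)
  have "1 + real m * (1 / real m) \<le> (1 + 1 / real m) ^ m"
    by (rule Bernoulli_inequality) (use m in \<open>auto intro: order_trans[of _ 0]\<close>)
  hence B: "2 \<le> (1 + 1 / real m) ^ m" using m by simp
  have "1 - 1 / real n = 1 / (1 + 1 / real m)" using m by (simp add: field_simps)
  then have "(1 - 1 / real n) ^ (n - 1) = 1 / (1 + 1 / real m) ^ m"
    by (simp add: m_def power_one_over)
  also have "\<dots> \<le> 1 / 2" using B by (intro divide_left_mono) auto
  finally show ?thesis .
qed

lemma Fe_bounds:
  assumes "\<And>x. 0 \<le> F x \<and> F x \<le> 1"
  shows "0 \<le> Fe F t \<and> Fe F t \<le> 1"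
  using assms by (cases t) (auto simp: Fe_def)

lemma revenue_uniform_price:
  "revenue n F (\<lambda>_. p) T = p * (\<Sum>i<n. 1 - Fe F (T i))"
  unfolding revenue_def by (simp add: sum_distrib_left)

lemma equilibrium_expected_buyers_ge_half:
  assumes n: "0 < n" and mono: "mono F" and F01: "\<And>x. 0 \<le> F x \<and> F x \<le> 1"
    and eq: "T' \<in> equilibria n F (\<lambda>_. p)" and p: "0 \<le> p" "2 * p \<le> T"
    and FT: "F T \<le> 1 - 1 / real n"
  shows "1 / 2 \<le> (\<Sum>i<n. 1 - Fe F (T' i))"
proof (rule ccontr)
  define q where "q i = Fe F (T' i)" for i
  have q01: "0 \<le> q i \<and> q i \<le> 1" for i unfolding q_def by (rule Fe_bounds[OF F01])
  assume "\<not> 1 / 2 \<le> (\<Sum>i<n. 1 - Fe F (T' i))"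
  then have few: "(\<Sum>i<n. 1 - q i) < 1 / 2" by (simp add: q_def)
  then have all_half: "1 / 2 < (\<Prod>i<n. q i)"
    using prod_ge_1_minus_sum[of "{..<n}" q] q01 by auto
  have buys: "1 / real n \<le> 1 - q i" if i: "i < n" for i
  proof -
    have "(\<Prod>j<n. q j) = q i * (\<Prod>j\<in>{..<n} - {i}. q j)"
      using i by (simp add: prod.remove)
    also have "\<dots> \<le> (\<Prod>j\<in>{..<n} - {i}. q j)"
      using q01 by (intro mult_left_le_one_le prod_nonneg) auto
    finally have others: "1 / 2 < (\<Prod>j\<in>{..<n} - {i}. q j)" using all_half by simp
    have "T' i = ediv p (\<Prod>j\<in>{..<n} - {i}. q j)"
      using eq i unfolding equilibria_def q_def by blast
    then have "T' i = ereal (p / (\<Prod>j\<in>{..<n} - {i}. q j))"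
      using others unfolding ediv_def by (simp del: prod_zero_iff)
    then have "q i = F (p / (\<Prod>j\<in>{..<n} - {i}. q j))"
      by (simp add: q_def Fe_def)
    also have "\<dots> \<le> F T"
    proof (rule monoD[OF mono])
      have "p / (\<Prod>j\<in>{..<n} - {i}. q j) \<le> p / (1 / 2)"
        using others p(1) by (intro divide_left_mono) auto
      then show "p / (\<Prod>j\<in>{..<n} - {i}. q j) \<le> T" using p(2) by simp
    qed
    finally show ?thesis using FT by simp
  qed
  have "1 \<le> (\<Sum>i<n. 1 - q i)"
    using sum_mono[of "{..<n}" "\<lambda>_. 1 / real n" "\<lambda>i. 1 - q i"] buys n by simp
  with few show False by simp
qed

theorem lemma3p4:
  fixes n :: nat and F :: "real \<Rightarrow> real" and T' :: "nat \<Rightarrow> ereal"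
  assumes "n \<ge> 2"
    and "regular F"
    and "T' \<in> equilibria n F (\<lambda>_. Finv F (1 - 1 / real n) * (1 - 1 / real n) ^ (n - 1))"
  shows "revenue n F (\<lambda>_. Finv F (1 - 1 / real n) * (1 - 1 / real n) ^ (n - 1)) T'
         \<ge> 1 / 2 * revenue n F (\<lambda>_. Finv F (1 - 1 / real n) * (1 - 1 / real n) ^ (n - 1))
                     (\<lambda>_. ereal (Finv F (1 - 1 / real n)))"
proof -
  define T where "T = Finv F (1 - 1 / real n)"
  define p where "p = T * (1 - 1 / real n) ^ (n - 1)"
  have n: "2 \<le> real n" using assms(1) by simp
  then have "0 < 1 - 1 / real n" "1 - 1 / real n < 1" by (auto simp: field_simps)
  then have FT: "F T = 1 - 1 / real n" and T0: "0 \<le> T"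
    using regular_F_Finv[OF assms(2)] by (auto simp: T_def)
  have p0: "0 \<le> p" using T0 n by (simp add: p_def)
  have "2 * p \<le> T"
    using mult_left_mono[OF one_minus_inverse_power_le_half[OF assms(1)] T0] by (simp add: p_def)
  moreover have "\<And>x. 0 \<le> F x \<and> F x \<le> 1"
    using regular_cdf_nonneg[OF assms(2)] regular_cdf_le_1[OF assms(2)] by blast
  moreover have "T' \<in> equilibria n F (\<lambda>_. p)" using assms(3) unfolding p_def T_def .
  moreover have "0 < n" "F T \<le> 1 - 1 / real n" using assms(1) FT by auto
  ultimately have "1 / 2 \<le> (\<Sum>i<n. 1 - Fe F (T' i))"
    using equilibrium_expected_buyers_ge_half regular_cdf_mono[OF assms(2)] p0 by blast
  then have "p * (1 / 2) \<le> revenue n F (\<lambda>_. p) T'"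
    unfolding revenue_uniform_price by (rule mult_left_mono[OF _ p0])
  moreover have "revenue n F (\<lambda>_. p) (\<lambda>_. ereal T) = p"
    using FT n by (simp add: revenue_uniform_price Fe_def)
  ultimately show ?thesis unfolding T_def[symmetric] p_def[symmetric] by simp
qed

end
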